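(* Let $m\ge6$ be even, $t=m/2$, and $s$ an integer with $2\le s\le 2^{t-1}-1$. Let $E_1,\dots,E_\alpha$ be a partial spread in $\mathbb{F}_2^m$ and $A,B\subseteq\{1,\dots,\alpha\}$ with $|A|=|B|=s$ and $|A\cap B|=1$. Let $f=\sum_{i\in A}f_i$ and $g=\sum_{i\in B}f_i$. Then $\mathcal{C}_{f,g}$ is a minimal binary linear code of length $2^m-1$ and dimension $m+2$, and the multiset of weights of its codewords is: $0$ once; $s(2^t-1)$ twice; $(2s-2)(2^t-1)$ once; $2^{m-1}$ with multiplicity $2^m-1$; $2^{m-1}-s$ with multiplicity $2(2^t+1-s)(2^t-1)$; $2^{m-1}-(2s-2)$ with multiplicity $(2^t+3-2s)(2^t-1)$; $2^{m-1}+2^t-s$ with multiplicity $2s(2^t-1)$; $2^{m-1}+2^t-(2s-2)$ with multiplicity $(2s-2)(2^t-1)$ (listed weights that coincide have their multiplicities added). Moreover, if in addition $s\le 2^{t-2}$, then $w_{\min}/w_{\max}\le 1/2$, where $w_{\min}$ and $w_{\max}$ are the minimum and maximum nonzero weights of $\mathcal{C}_{f,g}$.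
   Context: A partial spread in $\mathbb{F}_2^m$ ($m=2t$) is a set of subspaces $E_1,\dots,E_\alpha$ of $\mathbb{F}_2^m$, each of dimension $t$, with $E_i\cap E_j=\{\mathbf{0}\}$ for $i\ne j$. $f_i:\mathbb{F}_2^m\to\mathbb{F}_2$ is the indicator function of $E_i\setminus\{\mathbf{0}\}$; sums of Boolean functions are mod 2. $\mathcal{C}_{f,g}=\{(uf(\mathbf{x})+rg(\mathbf{x})+\mathbf{v}\cdot\mathbf{x})_{\mathbf{x}\in\mathbb{F}_2^m\setminus\{\mathbf{0}\}}: u,r\in\mathbb{F}_2,\ \mathbf{v}\in\mathbb{F}_2^m\}$ with the standard inner product. A binary linear code is minimal if no nonzero codeword $\mathbf{c}$ has a nonzero codeword $\mathbf{c}'\neq\mathbf{c}$ with $\mathrm{Supp}(\mathbf{c}')\subseteq\mathrm{Supp}(\mathbf{c})$, where $\mathrm{Supp}$ denotes the set of nonzero coordinate positions. *)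

theory Defs
  imports Complex_Main "HOL-Library.Z2" "HOL-Library.Function_Algebras" "HOL-Library.Multiset"
begin

text \<open>Vectors of F_2^m are functions 'n \<Rightarrow> bit with CARD('n) = m; words of a binary code
  with coordinates indexed by a set X are functions X \<Rightarrow> bit (extended by 0 outside X).\<close>

definition fscale :: "bit \<Rightarrow> ('a \<Rightarrow> bit) \<Rightarrow> ('a \<Rightarrow> bit)" where
  "fscale c f = (\<lambda>x. c * f x)"

interpretation fvs: Vector_Spaces.vector_space "fscale :: bit \<Rightarrow> ('a \<Rightarrow> bit) \<Rightarrow> ('a \<Rightarrow> bit)"
  by unfold_locales (auto simp: fscale_def algebra_simps fun_eq_iff)

definition dotp :: "('n::finite \<Rightarrow> bit) \<Rightarrow> ('n \<Rightarrow> bit) \<Rightarrow> bit" where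
  "dotp v x = (\<Sum>i\<in>UNIV. v i * x i)"

definition partial_spread :: "nat \<Rightarrow> nat \<Rightarrow> (nat \<Rightarrow> ('n::finite \<Rightarrow> bit) set) \<Rightarrow> bool" where
  "partial_spread t \<alpha> E \<longleftrightarrow>
     (\<forall>i\<in>{1..\<alpha>}. fvs.subspace (E i) \<and> fvs.dim (E i) = t) \<and>
     (\<forall>i\<in>{1..\<alpha>}. \<forall>j\<in>{1..\<alpha>}. i \<noteq> j \<longrightarrow> E i \<inter> E j = {0})"

definition ind :: "('n \<Rightarrow> bit) set \<Rightarrow> ('n \<Rightarrow> bit) \<Rightarrow> bit" where
  "ind E x = (if x \<in> E - {0} then 1 else 0)"

definition coords :: "('n::finite \<Rightarrow> bit) set" where
  "coords = UNIV - {0}"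

definition code_fg :: "(('n::finite \<Rightarrow> bit) \<Rightarrow> bit) \<Rightarrow> (('n \<Rightarrow> bit) \<Rightarrow> bit) \<Rightarrow> (('n \<Rightarrow> bit) \<Rightarrow> bit) set" where
  "code_fg f g = {(\<lambda>x. if x \<in> coords then u * f x + r * g x + dotp v x else 0) | u r v. True}"

definition supp :: "'a set \<Rightarrow> ('a \<Rightarrow> bit) \<Rightarrow> 'a set" where
  "supp X c = {x \<in> X. c x \<noteq> 0}"

definition wt :: "'a set \<Rightarrow> ('a \<Rightarrow> bit) \<Rightarrow> nat" where
  "wt X c = card (supp X c)"

definition binary_linear_code :: "'a set \<Rightarrow> ('a \<Rightarrow> bit) set \<Rightarrow> bool" where
  "binary_linear_code X C \<longleftrightarrow> fvs.subspace C \<and> (\<forall>c\<in>C. \<forall>x. x \<notin> X \<longrightarrow> c x = 0)"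

definition code_length :: "'a set \<Rightarrow> nat" where
  "code_length X = card X"

definition code_dim :: "('a \<Rightarrow> bit) set \<Rightarrow> nat" where
  "code_dim C = fvs.dim C"

definition minimal_code :: "'a set \<Rightarrow> ('a \<Rightarrow> bit) set \<Rightarrow> bool" where
  "minimal_code X C \<longleftrightarrow>
     (\<forall>c\<in>C. c \<noteq> 0 \<longrightarrow> \<not> (\<exists>c'\<in>C. c' \<noteq> 0 \<and> c' \<noteq> c \<and> supp X c' \<subseteq> supp X c))"

definition weight_mset :: "'a set \<Rightarrow> ('a \<Rightarrow> bit) set \<Rightarrow> nat multiset" where
  "weight_mset X C = image_mset (wt X) (mset_set C)"

definition nonzero_weights :: "'a set \<Rightarrow> ('a \<Rightarrow> bit) set \<Rightarrow> nat set" where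
  "nonzero_weights X C = {wt X c | c. c \<in> C \<and> c \<noteq> 0}"

end

(*
  Since the spread elements meet only in 0, f_S = \<Sum>i\<in>S f_i is the indicator of the union of
  the E_i - {0}, i \<in> S, and u f_A + r f_B = f_T for T the symmetric difference of the selected
  index sets, so |T| \<in> {0, s, s, 2s - 2}.  The word f_S + v\<cdot>x has weight |S|(2^t - 1) for v = 0;
  for v \<noteq> 0 each E_i meets the hyperplane v\<cdot>x = 0 in half of its points unless v \<in> E_i^\<bottom>,
  which gives weight 2^(m-1) - |S| + 2^t * #{i \<in> S. v \<in> E_i^\<bottom>}.  The duals E_i^\<bottom> again
  have 2^t elements and pairwise meet only in 0, so this count is 0 or 1 and the weight
  distribution follows by counting.  The nonzero weights fall into two bands far enough apart
  that no nonzero codeword is the sum of two nonzero codewords with disjoint supports, which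
  is minimality.
*)
theory Submission
  imports Defs "HOL-Library.Cardinality"
begin

section \<open>Subspaces of binary vectors\<close>

lemma UNIV_bit: "(UNIV :: bit set) = {0, 1}"
  by (auto intro: bit.exhaust)

instance bit :: finite
  by standard (simp add: UNIV_bit)

lemma card_bit_fun: "CARD('a::finite \<Rightarrow> bit) = 2 ^ CARD('a)"
proof -
  have "CARD(bit) = 2" by (simp add: UNIV_bit)
  then show ?thesis by (simp add: card_fun)
qed

lemma bit_fun_add_self [simp]: "(x :: 'a \<Rightarrow> bit) + x = 0"
  by (simp add: fun_eq_iff)

lemma bit_fun_add_self_left [simp]: "(x :: 'a \<Rightarrow> bit) + (x + y) = y"
  by (simp flip: add.assoc)

lemma bit_add_eq_0_iff: "(a :: bit) + b = 0 \<longleftrightarrow> a = b"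
  by (cases a; cases b) simp_all

lemma bit_fun_diff_eq_add: "(x :: 'a \<Rightarrow> bit) - y = x + y"
  by (simp add: fun_eq_iff)

lemma bit_fun_add_eq_0_iff: "(x :: 'a \<Rightarrow> bit) + y = 0 \<longleftrightarrow> x = y"
  by (metis bit_fun_add_self bit_fun_add_self_left add_0_right)

lemma card_span_independent:
  assumes "finite B" "fvs.independent (B :: ('a::finite \<Rightarrow> bit) set)"
  shows "card (fvs.span B) = 2 ^ card B"
  using assms
proof (induction B rule: finite_induct)
  case empty
  then show ?case by simp
next
  case (insert b B)
  have indep: "fvs.independent B" and b: "b \<notin> fvs.span B"
    using insert.prems insert.hyps(2) by (auto simp: fvs.independent_insert)
  have span: "fvs.span (insert b B) = fvs.span B \<union> (\<lambda>y. b + y) ` fvs.span B"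
  proof (intro equalityI subsetI)
    fix x assume "x \<in> fvs.span (insert b B)"
    then obtain k where k: "x - fscale k b \<in> fvs.span B"
      by (auto simp: fvs.span_insert)
    show "x \<in> fvs.span B \<union> (\<lambda>y. b + y) ` fvs.span B"
    proof (cases k)
      case zero
      then show ?thesis using k by simp
    next
      case one
      then have "x + b \<in> fvs.span B" using k by (simp only: fscale_def mult_1_left bit_fun_diff_eq_add)
      moreover have "x = b + (x + b)" by (simp add: add.commute)
      ultimately show ?thesis by blast
    qed
  next
    fix x assume "x \<in> fvs.span B \<union> (\<lambda>y. b + y) ` fvs.span B"
    then show "x \<in> fvs.span (insert b B)"
      using fvs.span_mono[of B "insert b B"] fvs.span_add[of b "insert b B"]
        fvs.span_base[of b "insert b B"] by auto
  qed
  have disjoint: "fvs.span B \<inter> (\<lambda>y. b + y) ` fvs.span B = {}"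
  proof (rule ccontr)
    assume "\<not> ?thesis"
    then obtain y where "y \<in> fvs.span B" "b + y \<in> fvs.span B" by auto
    then have "(b + y) + y \<in> fvs.span B" using fvs.span_add by blast
    then show False using b by (simp add: add.assoc)
  qed
  have "card (fvs.span (insert b B)) = card (fvs.span B) + card ((\<lambda>y. b + y) ` fvs.span B)"
    unfolding span using disjoint by (simp add: card_Un_disjoint)
  also have "card ((\<lambda>y. b + y) ` fvs.span B) = card (fvs.span B)"
    by (rule card_image) (auto simp: inj_on_def)
  finally show ?case using insert.IH[OF indep] insert.hyps by simp
qed

lemma card_subspace:
  assumes "fvs.subspace (S :: ('a::finite \<Rightarrow> bit) set)"
  shows "card S = 2 ^ fvs.dim S"
proof -
  obtain B where B: "B \<subseteq> S" "fvs.independent B" "S \<subseteq> fvs.span B" "card B = fvs.dim S"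
    by (rule fvs.basis_exists)
  have "fvs.span B = S" using fvs.span_minimal[OF B(1) assms] B(3) by auto
  then show ?thesis using card_span_independent[OF _ B(2)] B(4) by simp
qed

lemma dotp_add_left: "dotp (v + w) x = dotp v x + dotp w x"
  unfolding dotp_def by (simp only: plus_fun_def distrib_right sum.distrib)

lemma dotp_add_right: "dotp v (x + y) = dotp v x + dotp v y"
  unfolding dotp_def by (simp only: plus_fun_def distrib_left sum.distrib)

lemma dotp_commute: "dotp v x = dotp x v"
  unfolding dotp_def by (simp only: mult.commute)

lemma dotp_0_left [simp]: "dotp 0 x = 0"
  by (simp add: dotp_def)

lemma dotp_0_right [simp]: "dotp v 0 = 0"
  by (simp add: dotp_def)

lemma ex_dotp_eq_1:
  assumes "(v :: 'n::finite \<Rightarrow> bit) \<noteq> 0"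
  obtains x where "dotp v x = 1"
proof -
  obtain i where "v i = 1" using assms by (auto simp: fun_eq_iff)
  moreover have "dotp v (\<lambda>j. if j = i then 1 else 0) = v i"
    unfolding dotp_def by (simp add: if_distrib cong: if_cong)
  ultimately show ?thesis using that by metis
qed

definition dual :: "('n::finite \<Rightarrow> bit) set \<Rightarrow> ('n \<Rightarrow> bit) set" where
  "dual E = {v. \<forall>x\<in>E. dotp v x = 0}"

lemma dual_UNIV: "dual UNIV = {0}"
  by (auto simp: dual_def) (metis ex_dotp_eq_1 zero_neq_one)

lemma card_dotp_eq_0_add_card_dotp_eq_1:
  "card {x\<in>E. dotp v x = 0} + card {x\<in>E. dotp v x = 1} = card (E :: ('n::finite \<Rightarrow> bit) set)"
  by (subst card_Un_disjoint[symmetric]) (auto intro: arg_cong[where f = card])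

lemma card_dotp_eq_1:
  assumes "fvs.subspace (E :: ('n::finite \<Rightarrow> bit) set)"
  shows "2 * card {x\<in>E. dotp v x = 1} = (if v \<in> dual E then 0 else card E)"
proof (cases "v \<in> dual E")
  case True
  then show ?thesis by (auto simp: dual_def)
next
  case False
  then obtain e where e: "e \<in> E" "dotp v e = 1" by (auto simp: dual_def)
  have "bij_betw (\<lambda>x. x + e) {x\<in>E. dotp v x = 0} {x\<in>E. dotp v x = 1}"
    by (rule bij_betw_byWitness[where f' = "\<lambda>x. x + e"])
      (use assms e in \<open>auto simp: add.assoc dotp_add_right fvs.subspace_add\<close>)
  then have "card {x\<in>E. dotp v x = 0} = card {x\<in>E. dotp v x = 1}"
    by (rule bij_betw_same_card)
  then show ?thesis using False card_dotp_eq_0_add_card_dotp_eq_1[of E v] by simp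
qed

lemma card_dotp_eq_0:
  assumes "fvs.subspace (E :: ('n::finite \<Rightarrow> bit) set)"
  shows "card {x\<in>E. dotp v x = 0} = card {x\<in>E. dotp v x = 1} + (if v \<in> dual E then card E else 0)"
proof (cases "v \<in> dual E")
  case True
  then have "{x\<in>E. dotp v x = 1} = {}" "{x\<in>E. dotp v x = 0} = E"
    by (auto simp: dual_def)
  then show ?thesis using True by simp
next
  case False
  then show ?thesis
    using card_dotp_eq_1[OF assms, of v] card_dotp_eq_0_add_card_dotp_eq_1[of E v] by simp
qed

lemma card_filter_eq_sum: "finite A \<Longrightarrow> card {x\<in>A. P x} = (\<Sum>x\<in>A. if P x then 1 else 0)"
  by (simp only: card_eq_sum sum.inter_filter)

lemma sum_card_dotp_eq_1_swap:
  "(\<Sum>v\<in>UNIV. card {x\<in>E. dotp v x = 1})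
     = (\<Sum>x\<in>E. card {v. dotp v (x :: 'n::finite \<Rightarrow> bit) = 1})"
proof -
  have "(\<Sum>v\<in>UNIV. card {x\<in>E. dotp v x = 1})
      = (\<Sum>v\<in>UNIV. \<Sum>x\<in>E. if dotp v x = 1 then 1 else 0)"
    by (simp add: card_filter_eq_sum)
  also have "\<dots> = (\<Sum>x\<in>E. \<Sum>v\<in>UNIV. if dotp v x = 1 then 1 else 0)"
    by (rule sum.swap)
  also have "\<dots> = (\<Sum>x\<in>E. card {v. dotp v x = 1})"
    using card_filter_eq_sum[of "UNIV :: ('n \<Rightarrow> bit) set"] by simp
  finally show ?thesis .
qed

lemma card_dotp_eq_1_UNIV:
  "2 * card {v. dotp v (x :: 'n::finite \<Rightarrow> bit) = 1} = (if x = 0 then 0 else 2 ^ CARD('n))"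
proof -
  have "{v. dotp v x = 1} = {v\<in>UNIV. dotp x v = 1}"
    using dotp_commute[of _ x] by auto
  then show ?thesis
    using card_dotp_eq_1[OF fvs.subspace_UNIV, of x] by (simp add: dual_UNIV card_bit_fun)
qed

text \<open>Both ends of the chain below count the pairs (v, x) with x \<in> E and v\<cdot>x = 1, twice.\<close>

lemma card_mult_card_dual:
  assumes "fvs.subspace (E :: ('n::finite \<Rightarrow> bit) set)"
  shows "card E * card (dual E) = 2 ^ CARD('n)"
proof -
  define N where "N = (2::nat) ^ CARD('n)"
  have "(N - card (dual E)) * card E = (\<Sum>v\<in>UNIV - dual E. card E)"
    by (simp add: card_Diff_subset N_def card_bit_fun)
  also have "\<dots> = (\<Sum>v\<in>UNIV. 2 * card {x\<in>E. dotp v x = 1})"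
    by (rule sum.mono_neutral_cong_left) (auto simp: card_dotp_eq_1[OF assms])
  also have "\<dots> = (\<Sum>x\<in>E. 2 * card {v. dotp v x = 1})"
    using sum_card_dotp_eq_1_swap[of E] by (simp flip: sum_distrib_left)
  also have "\<dots> = (\<Sum>x\<in>E - {0}. N)"
    by (rule sum.mono_neutral_cong_right) (auto simp: card_dotp_eq_1_UNIV N_def)
  also have "\<dots> = (card E - 1) * N"
    using fvs.subspace_0[OF assms] by (simp add: card_Diff_singleton)
  finally have "(N - card (dual E)) * card E = (card E - 1) * N" .
  moreover have "card (dual E) \<le> N"
    using card_mono[of UNIV "dual E"] by (simp add: N_def card_bit_fun)
  moreover have "1 \<le> card E"
    using fvs.subspace_0[OF assms] by (auto simp: Suc_le_eq card_gt_0_iff)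
  ultimately have "card E * N - card E * card (dual E) = card E * N - N"
    by (simp add: diff_mult_distrib algebra_simps)
  moreover have "card E * card (dual E) \<le> card E * N" "N \<le> card E * N"
    using \<open>card (dual E) \<le> N\<close> \<open>1 \<le> card E\<close> by simp_all
  ultimately show ?thesis unfolding N_def by linarith
qed

section \<open>Binary codes and multisets\<close>

lemma wt_eq_add_if_supp_subset:
  fixes a c :: "'a \<Rightarrow> bit"
  assumes "finite X" and "supp X a \<subseteq> supp X c"
  shows "wt X c = wt X a + wt X (c + a)"
proof -
  have "supp X (c + a) = supp X c - supp X a"
    using assms(2) by (auto simp: supp_def)
  moreover have "card (supp X a) \<le> card (supp X c)"
    using assms by (intro card_mono) (auto simp: supp_def)
  ultimately show ?thesis
    unfolding wt_def using assms by (simp add: card_Diff_subset supp_def)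
qed

text \<open>A codeword c' with supp c' \<subseteq> supp c splits c into c' and c + c', whose supports
  are disjoint.\<close>

lemma minimal_code_if_wt_add_neq:
  assumes code: "binary_linear_code X C" and "finite X"
    and no_split: "\<And>a b. a \<in> C \<Longrightarrow> b \<in> C \<Longrightarrow> a \<noteq> 0 \<Longrightarrow> b \<noteq> 0
      \<Longrightarrow> wt X (a + b) \<noteq> wt X a + wt X b"
  shows "minimal_code X C"
  unfolding minimal_code_def
proof (intro ballI impI notI)
  fix c assume "c \<in> C"
  assume "\<exists>c'\<in>C. c' \<noteq> 0 \<and> c' \<noteq> c \<and> supp X c' \<subseteq> supp X c"
  then obtain c' where c': "c' \<in> C" "c' \<noteq> 0" "c' \<noteq> c" "supp X c' \<subseteq> supp X c"
    by blast
  have "c + c' \<in> C"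
    using code \<open>c \<in> C\<close> c'(1) by (simp add: binary_linear_code_def fvs.subspace_add)
  moreover have "c + c' \<noteq> 0"
    using c'(3) by (simp add: bit_fun_add_eq_0_iff)
  moreover have "c' + (c + c') = c"
    by (metis add.left_commute bit_fun_add_self add_0_right)
  ultimately show False
    using no_split[OF c'(1) _ c'(2)] wt_eq_add_if_supp_subset[OF \<open>finite X\<close> c'(4)] by metis
qed

lemma code_length_coords: "code_length (coords :: ('n::finite \<Rightarrow> bit) set) = 2 ^ CARD('n) - 1"
  by (simp add: code_length_def coords_def card_Diff_singleton card_bit_fun)

lemma sum_sym_diff_bit:
  fixes h :: "'a \<Rightarrow> bit"
  assumes "finite X" "finite Y"
  shows "(\<Sum>i\<in>sym_diff X Y. h i) = (\<Sum>i\<in>X. h i) + (\<Sum>i\<in>Y. h i)"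
proof -
  have cancel: "p + q + (p + r) = q + r" for p q r :: bit
    by (cases p; cases q; cases r) simp_all
  have "(\<Sum>i\<in>sym_diff X Y. h i) = (\<Sum>i\<in>X - Y. h i) + (\<Sum>i\<in>Y - X. h i)"
    using assms by (intro sum.union_disjoint) auto
  moreover have "(\<Sum>i\<in>X. h i) = (\<Sum>i\<in>X \<inter> Y. h i) + (\<Sum>i\<in>X - Y. h i)"
    using sum.Int_Diff[OF assms(1)] by blast
  moreover have "(\<Sum>i\<in>Y. h i) = (\<Sum>i\<in>X \<inter> Y. h i) + (\<Sum>i\<in>Y - X. h i)"
    using sum.Int_Diff[OF assms(2), of h X] by (simp add: Int_commute)
  ultimately show ?thesis
    by (simp only: cancel)
qed

lemma replicate_mset_add: "replicate_mset (a + b) x = replicate_mset a x + replicate_mset b x"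
  by (induction a) simp_all

lemma replicate_mset_double: "replicate_mset (2 * n) x = replicate_mset n x + replicate_mset n x"
  by (simp add: mult_2 replicate_mset_add)

lemma image_mset_mset_set_const:
  assumes "finite A" and "\<And>x. x \<in> A \<Longrightarrow> f x = c"
  shows "image_mset f (mset_set A) = replicate_mset (card A) c"
  by (subst image_mset_cong[where g = "\<lambda>_. c"]) (use assms in \<open>auto simp: image_mset_const_eq\<close>)

lemma image_mset_mset_set_UNIV_bit_prod:
  "image_mset f (mset_set (UNIV :: (bit \<times> 'a::finite) set))
     = image_mset (\<lambda>x. f (0, x)) (mset_set UNIV) + image_mset (\<lambda>x. f (1, x)) (mset_set UNIV)"
proof -
  have "(UNIV :: (bit \<times> 'a) set) = Pair 0 ` UNIV \<union> Pair 1 ` UNIV"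
    using UNIV_bit by auto
  then have "mset_set (UNIV :: (bit \<times> 'a) set) = mset_set (Pair 0 ` UNIV) + mset_set (Pair 1 ` UNIV)"
    using mset_set_Union[of "Pair 0 ` UNIV" "Pair (1::bit) ` (UNIV :: 'a set)"] by auto
  then show ?thesis
    by (simp add: image_mset_mset_set[symmetric] inj_on_def multiset.map_comp comp_def)
qed

lemma mset_set_UNIV_partition:
  "mset_set (UNIV :: 'a::finite set)
     = add_mset a (mset_set {x. x \<noteq> a \<and> P x} + mset_set {x. x \<noteq> a \<and> \<not> P x})"
proof -
  let ?X = "{x. x \<noteq> a \<and> P x}" and ?Y = "{x. x \<noteq> a \<and> \<not> P x}"
  have "mset_set (UNIV :: 'a set) = mset_set (insert a (?X \<union> ?Y))"
    by (rule arg_cong[where f = mset_set]) auto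
  also have "\<dots> = add_mset a (mset_set (?X \<union> ?Y))"
    by simp
  also have "mset_set (?X \<union> ?Y) = mset_set ?X + mset_set ?Y"
    by (rule mset_set_Union) auto
  finally show ?thesis .
qed

section \<open>Words supported on a partial spread\<close>

locale partial_spread_space =
  fixes E :: "nat \<Rightarrow> ('n::finite \<Rightarrow> bit) set" and t m \<alpha> :: nat
  assumes card_UNIV_index: "CARD('n) = m" and m_eq: "m = 2 * t"
    and partial_spread: "partial_spread t \<alpha> E"
begin

lemma subspace_E: "i \<in> {1..\<alpha>} \<Longrightarrow> fvs.subspace (E i)"
  using partial_spread by (simp add: partial_spread_def)

lemma zero_in_E: "i \<in> {1..\<alpha>} \<Longrightarrow> 0 \<in> E i"
  using subspace_E fvs.subspace_0 by blast

lemma card_E: "i \<in> {1..\<alpha>} \<Longrightarrow> card (E i) = 2 ^ t"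
  using partial_spread card_subspace[OF subspace_E] by (simp add: partial_spread_def)

lemma E_Int_E: "i \<in> {1..\<alpha>} \<Longrightarrow> j \<in> {1..\<alpha>} \<Longrightarrow> i \<noteq> j \<Longrightarrow> E i \<inter> E j = {0}"
  using partial_spread by (simp add: partial_spread_def)

lemma t_pos: "0 < t"
  using card_UNIV_index m_eq by (metis zero_less_card_finite mult_0_right neq0_conv)

lemma card_points: "CARD('n \<Rightarrow> bit) = 2 ^ m"
  by (simp add: card_bit_fun card_UNIV_index)

lemma two_pow_m: "2 ^ m = 2 ^ t * (2::nat) ^ t"
  by (simp add: m_eq mult_2 power_add)

lemma two_pow_m_minus_1: "2 * 2 ^ (m - 1) = (2::nat) ^ m"
  using t_pos m_eq by (simp flip: power_Suc)

lemma card_dual_E: "i \<in> {1..\<alpha>} \<Longrightarrow> card (dual (E i)) = 2 ^ t"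
  using card_mult_card_dual[OF subspace_E, of i] card_E[of i]
  by (simp add: card_UNIV_index two_pow_m)

lemma E_sums_eq_UNIV:
  assumes i: "i \<in> {1..\<alpha>}" and j: "j \<in> {1..\<alpha>}" and "i \<noteq> j"
  shows "(\<lambda>(a, b). a + b) ` (E i \<times> E j) = UNIV"
proof -
  have "inj_on (\<lambda>(a, b). a + b) (E i \<times> E j)"
  proof (rule inj_onI, clarify)
    fix a b a' b' assume a: "a \<in> E i" "a' \<in> E i" and b: "b \<in> E j" "b' \<in> E j"
      and eq: "a + b = a' + b'"
    have "(a + a') + (b + b') = (a + b) + (a' + b')"
      by (simp only: add_ac)
    then have "a + a' = b + b'"
      using eq by (simp add: bit_fun_add_eq_0_iff)
    moreover have "a + a' \<in> E i" "b + b' \<in> E j"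
      using a b subspace_E[OF i] subspace_E[OF j] fvs.subspace_add by blast+
    ultimately have "a + a' = 0" using E_Int_E[OF i j \<open>i \<noteq> j\<close>] by auto
    then show "a = a' \<and> b = b'" using eq by (simp add: bit_fun_add_eq_0_iff)
  qed
  then have "card ((\<lambda>(a, b). a + b) ` (E i \<times> E j)) = CARD('n \<Rightarrow> bit)"
    by (simp add: card_image card_cartesian_product card_E[OF i] card_E[OF j] card_points two_pow_m)
  then show ?thesis
    by (intro card_subset_eq) auto
qed

lemma dual_E_Int_dual_E:
  assumes i: "i \<in> {1..\<alpha>}" and j: "j \<in> {1..\<alpha>}" and "i \<noteq> j"
  shows "dual (E i) \<inter> dual (E j) = {0}"
proof -
  have "v \<in> dual UNIV" if v: "v \<in> dual (E i)" "v \<in> dual (E j)" for v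
  proof -
    have "dotp v y = 0" for y
    proof -
      have "y \<in> (\<lambda>(a, b). a + b) ` (E i \<times> E j)"
        using E_sums_eq_UNIV[OF assms] by simp
      then obtain a b where "a \<in> E i" "b \<in> E j" "y = a + b" by auto
      then show ?thesis using v by (simp add: dual_def dotp_add_right)
    qed
    then show ?thesis by (simp add: dual_def)
  qed
  moreover have "0 \<in> dual (E i) \<inter> dual (E j)"
    by (simp add: dual_def)
  ultimately show ?thesis
    using dual_UNIV by blast
qed

definition spread_fun :: "nat set \<Rightarrow> ('n \<Rightarrow> bit) \<Rightarrow> bit" where
  "spread_fun S x = (\<Sum>i\<in>S. ind (E i) x)"

definition spread_union :: "nat set \<Rightarrow> ('n \<Rightarrow> bit) set" where
  "spread_union S = (\<Union>i\<in>S. E i - {0})"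

definition spread_word :: "nat set \<Rightarrow> ('n \<Rightarrow> bit) \<Rightarrow> ('n \<Rightarrow> bit) \<Rightarrow> bit" where
  "spread_word S v = (\<lambda>x. if x \<in> coords then spread_fun S x + dotp v x else 0)"

definition dual_hits :: "nat set \<Rightarrow> ('n \<Rightarrow> bit) \<Rightarrow> nat set" where
  "dual_hits S v = {i\<in>S. v \<in> dual (E i)}"

context
  fixes S :: "nat set"
  assumes S_sub: "S \<subseteq> {1..\<alpha>}"
begin

lemma finite_S: "finite S"
  using S_sub finite_subset by blast

lemma spread_fun_eq: "spread_fun S x = (if x \<in> spread_union S then 1 else 0)"
proof (cases "x \<in> spread_union S")
  case True
  then obtain i where i: "i \<in> S" "x \<in> E i" "x \<noteq> 0" by (auto simp: spread_union_def)
  have "x \<notin> E j" if "j \<in> S" "j \<noteq> i" for j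
    using i that S_sub E_Int_E[of i j] by blast
  then have "ind (E j) x = (if j = i then 1 else 0)" if "j \<in> S" for j
    using i that by (auto simp: ind_def)
  then have "spread_fun S x = (\<Sum>j\<in>S. if j = i then 1 else 0)"
    unfolding spread_fun_def by (intro sum.cong) auto
  then show ?thesis using True i finite_S by simp
next
  case False
  then show ?thesis by (auto simp: spread_fun_def spread_union_def ind_def intro: sum.neutral)
qed

lemma card_spread_union_filter:
  "card {x\<in>spread_union S. P x} = (\<Sum>i\<in>S. card {x\<in>E i - {0}. P x})"
proof -
  have "{x\<in>spread_union S. P x} = (\<Union>i\<in>S. {x\<in>E i - {0}. P x})"
    by (auto simp: spread_union_def)
  moreover have "card (\<Union>i\<in>S. {x\<in>E i - {0}. P x}) = (\<Sum>i\<in>S. card {x\<in>E i - {0}. P x})"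
  proof (rule card_UN_disjoint[OF finite_S])
    show "\<forall>i\<in>S. \<forall>j\<in>S. i \<noteq> j \<longrightarrow> {x\<in>E i - {0}. P x} \<inter> {x\<in>E j - {0}. P x} = {}"
      using S_sub E_Int_E by blast
  qed simp
  ultimately show ?thesis by simp
qed

lemma wt_spread_word_0: "wt coords (spread_word S 0) = card S * (2 ^ t - 1)"
proof -
  have "supp coords (spread_word S 0) = spread_union S"
    by (auto simp: supp_def spread_word_def spread_fun_eq coords_def spread_union_def)
  then have "wt coords (spread_word S 0) = (\<Sum>i\<in>S. card (E i - {0}))"
    using card_spread_union_filter[of "\<lambda>_. True"] by (simp add: wt_def set_diff_eq)
  also have "\<dots> = (\<Sum>i\<in>S. 2 ^ t - 1)"
    using S_sub zero_in_E card_E by (intro sum.cong) (auto simp: card_Diff_singleton)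
  finally show ?thesis by simp
qed

lemma card_dotp_eq_0_punctured:
  assumes "i \<in> S"
  shows "card {x\<in>E i - {0}. dotp v x = 0} + 1
    = card {x\<in>E i - {0}. dotp v x = 1} + (if v \<in> dual (E i) then 2 ^ t else 0)"
proof -
  have i: "i \<in> {1..\<alpha>}" using assms S_sub by blast
  have "card {x\<in>E i. dotp v x = 0} = card (insert 0 {x\<in>E i - {0}. dotp v x = 0})"
    using zero_in_E[OF i] by (intro arg_cong[where f = card]) auto
  then have zero: "card {x\<in>E i. dotp v x = 0} = card {x\<in>E i - {0}. dotp v x = 0} + 1"
    by simp
  have one: "{x\<in>E i - {0}. dotp v x = 1} = {x\<in>E i. dotp v x = 1}"
    by auto
  show ?thesis
    using zero card_dotp_eq_0[OF subspace_E[OF i], of v, unfolded card_E[OF i]]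
    unfolding one by linarith
qed

lemma wt_spread_word:
  assumes "v \<noteq> 0"
  shows "wt coords (spread_word S v) + card S = 2 ^ (m - 1) + 2 ^ t * card (dual_hits S v)"
proof -
  define U0 where "U0 = {x\<in>spread_union S. dotp v x = 0}"
  define U1 where "U1 = {x\<in>spread_union S. dotp v x = 1}"
  define D where "D = {x. dotp v x = 1}"
  have "supp coords (spread_word S v) = U0 \<union> (D - U1)"
    by (auto simp: supp_def spread_word_def spread_fun_eq coords_def spread_union_def U0_def U1_def D_def)
  moreover have "U0 \<inter> (D - U1) = {}" "U1 \<subseteq> D"
    by (auto simp: U0_def U1_def D_def)
  ultimately have wt: "wt coords (spread_word S v) = card U0 + (card D - card U1)"
    unfolding wt_def by (simp add: card_Un_disjoint card_Diff_subset)
  have "2 * card D = 2 ^ m"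
    using card_dotp_eq_1[OF fvs.subspace_UNIV, of v] assms
    by (simp add: D_def dual_UNIV card_points)
  then have card_D: "card D = 2 ^ (m - 1)"
    using two_pow_m_minus_1 by simp
  have "card U1 \<le> card D"
    by (intro card_mono) (auto simp: U1_def D_def)
  have "card U0 + card S = (\<Sum>i\<in>S. card {x\<in>E i - {0}. dotp v x = 0} + 1)"
    unfolding U0_def card_spread_union_filter sum.distrib by simp
  also have "\<dots> = (\<Sum>i\<in>S. card {x\<in>E i - {0}. dotp v x = 1} + (if v \<in> dual (E i) then 2 ^ t else 0))"
    by (rule sum.cong[OF refl], rule card_dotp_eq_0_punctured)
  also have "\<dots> = card U1 + 2 ^ t * card (dual_hits S v)"
    by (simp add: U1_def card_spread_union_filter sum.distrib sum.inter_filter[symmetric] finite_S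
        dual_hits_def)
  finally show ?thesis
    using wt card_D \<open>card U1 \<le> card D\<close> by linarith
qed

lemma card_dual_hits_le_1:
  assumes "v \<noteq> 0"
  shows "card (dual_hits S v) \<le> 1"
proof -
  have "i = j" if hits: "i \<in> dual_hits S v" "j \<in> dual_hits S v" for i j
  proof (rule ccontr)
    assume "i \<noteq> j"
    have "i \<in> {1..\<alpha>}" "j \<in> {1..\<alpha>}"
      using hits S_sub by (auto simp: dual_hits_def)
    then have "v \<in> {0}"
      using dual_E_Int_dual_E[OF _ _ \<open>i \<noteq> j\<close>] hits by (auto simp: dual_hits_def)
    then show False using assms by simp
  qed
  then show ?thesis
    using finite_S by (simp add: card_le_Suc0_iff_eq dual_hits_def)
qed

lemma card_dual_hit: "card {v. v \<noteq> 0 \<and> dual_hits S v \<noteq> {}} = card S * (2 ^ t - 1)"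
proof -
  have "{v. v \<noteq> 0 \<and> dual_hits S v \<noteq> {}} = (\<Union>i\<in>S. dual (E i) - {0})"
    by (auto simp: dual_hits_def)
  moreover have "card (\<Union>i\<in>S. dual (E i) - {0}) = (\<Sum>i\<in>S. card (dual (E i) - {0}))"
  proof (rule card_UN_disjoint[OF finite_S])
    show "\<forall>i\<in>S. \<forall>j\<in>S. i \<noteq> j \<longrightarrow> (dual (E i) - {0}) \<inter> (dual (E j) - {0}) = {}"
      using S_sub dual_E_Int_dual_E by blast
  qed simp
  moreover have "card (dual (E i) - {0}) = 2 ^ t - 1" if "i \<in> S" for i
    using that S_sub card_dual_E[of i] by (auto simp: card_Diff_singleton dual_def)
  ultimately show ?thesis by simp
qed

lemma card_dual_miss:
  "card {v. v \<noteq> 0 \<and> dual_hits S v = {}} = (2 ^ t + 1 - card S) * (2 ^ t - 1)"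
proof -
  let ?Z0 = "{v. v \<noteq> 0 \<and> dual_hits S v = {}}" and ?Z1 = "{v. v \<noteq> 0 \<and> dual_hits S v \<noteq> {}}"
  define Q where "Q = (2::nat) ^ t - 1"
  have P: "2 ^ t = Q + 1"
    by (simp add: Q_def)
  have "card ?Z0 + card ?Z1 = card (?Z0 \<union> ?Z1)"
    by (rule card_Un_disjoint[symmetric]) auto
  also have "?Z0 \<union> ?Z1 = UNIV - {0}"
    by auto
  also have "card (UNIV - {0 :: 'n \<Rightarrow> bit}) = (Q + 2) * Q"
    by (simp add: card_Diff_singleton card_points two_pow_m P algebra_simps)
  finally have "card ?Z0 + card ?Z1 = (Q + 2) * Q" .
  moreover have "card ?Z1 = card S * Q"
    using card_dual_hit by (simp add: Q_def)
  ultimately have "card ?Z0 = (Q + 2) * Q - card S * Q"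
    by linarith
  then show ?thesis
    unfolding P by (simp add: diff_mult_distrib)
qed

lemma weight_mset_spread_words:
  "image_mset (\<lambda>v. wt coords (spread_word S v)) (mset_set UNIV) =
     {#card S * (2 ^ t - 1)#}
     + replicate_mset ((2 ^ t + 1 - card S) * (2 ^ t - 1)) (2 ^ (m - 1) - card S)
     + replicate_mset (card S * (2 ^ t - 1)) (2 ^ (m - 1) + 2 ^ t - card S)"
proof -
  define Z0 where "Z0 = {v. v \<noteq> 0 \<and> dual_hits S v = {}}"
  define Z1 where "Z1 = {v. v \<noteq> 0 \<and> \<not> dual_hits S v = {}}"
  have "image_mset (\<lambda>v. wt coords (spread_word S v)) (mset_set Z0)
      = replicate_mset (card Z0) (2 ^ (m - 1) - card S)"
    using wt_spread_word by (intro image_mset_mset_set_const) (fastforce simp: Z0_def)+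
  moreover have "image_mset (\<lambda>v. wt coords (spread_word S v)) (mset_set Z1)
      = replicate_mset (card Z1) (2 ^ (m - 1) + 2 ^ t - card S)"
  proof (intro image_mset_mset_set_const)
    fix v assume "v \<in> Z1"
    then have "v \<noteq> 0" "card (dual_hits S v) = 1"
      using card_dual_hits_le_1[of v] finite_S
      by (auto simp: Z1_def dual_hits_def le_Suc_eq card_gt_0_iff)
    then show "wt coords (spread_word S v) = 2 ^ (m - 1) + 2 ^ t - card S"
      using wt_spread_word[of v] by simp
  qed simp
  ultimately show ?thesis
    using mset_set_UNIV_partition[of 0 "\<lambda>v. dual_hits S v = {}"] wt_spread_word_0
      card_dual_miss card_dual_hit by (simp add: Z0_def Z1_def)
qed
end

end

section \<open>The code spanned by two overlapping spread sums\<close>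

locale two_spread_code = partial_spread_space E t m \<alpha>
  for E :: "nat \<Rightarrow> ('n::finite \<Rightarrow> bit) set" and t m \<alpha> +
  fixes A B :: "nat set" and s :: nat
  assumes A_sub: "A \<subseteq> {1..\<alpha>}" and B_sub: "B \<subseteq> {1..\<alpha>}"
    and card_A: "card A = s" and card_B: "card B = s" and card_A_Int_B: "card (A \<inter> B) = 1"
    and s_ge_2: "2 \<le> s" and s_le: "s \<le> 2 ^ (t - 1) - 1"
begin

lemma two_s_add_2_le: "2 * s + 2 \<le> 2 ^ t"
proof -
  have "2 ^ t = 2 * (2::nat) ^ (t - 1)" "1 \<le> (2::nat) ^ (t - 1)"
    using t_pos by (simp_all flip: power_Suc)
  then show ?thesis using s_le by linarith
qed

lemma three_le_t: "3 \<le> t"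
proof (rule ccontr)
  assume "\<not> 3 \<le> t"
  then have "(2::nat) ^ t \<le> 2 ^ 2"
    by (intro power_increasing) simp_all
  then show False
    using two_s_add_2_le s_ge_2 by simp
qed

lemma eight_le_two_pow_t: "8 \<le> (2::nat) ^ t"
proof -
  have "(2::nat) ^ 3 \<le> 2 ^ t"
    using three_le_t by (intro power_increasing) simp_all
  then show ?thesis by simp
qed

definition spread_indices :: "bit \<Rightarrow> bit \<Rightarrow> nat set" where
  "spread_indices u r = sym_diff (if u = 1 then A else {}) (if r = 1 then B else {})"

definition codeword :: "bit \<Rightarrow> bit \<Rightarrow> ('n \<Rightarrow> bit) \<Rightarrow> ('n \<Rightarrow> bit) \<Rightarrow> bit" where
  "codeword u r v =
    (\<lambda>x. if x \<in> coords then u * spread_fun A x + r * spread_fun B x + dotp v x else 0)"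

abbreviation code :: "(('n \<Rightarrow> bit) \<Rightarrow> bit) set" where
  "code \<equiv> code_fg (spread_fun A) (spread_fun B)"

lemma code_eq_range: "code = range (\<lambda>(u, r, v). codeword u r v)"
proof -
  have "code = {codeword u r v | u r v. True}"
    by (simp add: code_fg_def codeword_def)
  also have "\<dots> = range (\<lambda>(u, r, v). codeword u r v)"
    by (auto simp: image_def)
  finally show ?thesis .
qed

lemma mem_code_iff: "c \<in> code \<longleftrightarrow> (\<exists>u r v. c = codeword u r v)"
  by (simp add: code_fg_def codeword_def)

lemma spread_indices_sub: "spread_indices u r \<subseteq> {1..\<alpha>}"
  using A_sub B_sub by (auto simp: spread_indices_def)

lemma codeword_eq_spread_word: "codeword u r v = spread_word (spread_indices u r) v"
proof -
  have scale: "c * spread_fun X x = spread_fun (if c = 1 then X else {}) x" for c X x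
    by (cases c) (simp_all add: spread_fun_def)
  have "finite A" "finite B"
    using A_sub B_sub finite_subset by blast+
  then have "u * spread_fun A x + r * spread_fun B x = spread_fun (spread_indices u r) x" for x
    unfolding scale unfolding spread_indices_def spread_fun_def by (intro sum_sym_diff_bit[symmetric]) simp_all
  then show ?thesis
    unfolding codeword_def spread_word_def by (simp only:)
qed

lemma card_spread_indices:
  "card (spread_indices 0 0) = 0" "card (spread_indices 1 0) = s"
  "card (spread_indices 0 1) = s" "card (spread_indices 1 1) = 2 * s - 2"
proof -
  have "finite A" "finite B"
    using A_sub B_sub finite_subset by blast+
  then have "card (A - B) = s - 1" "card (B - A) = s - 1"
    using card_Diff_subset_Int[of A B] card_Diff_subset_Int[of B A] card_A card_B card_A_Int_B
    by (simp_all add: Int_commute)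
  then have "card (sym_diff A B) = 2 * s - 2"
    using \<open>finite A\<close> \<open>finite B\<close> s_ge_2 by (subst card_Un_disjoint) auto
  then show "card (spread_indices 0 0) = 0" "card (spread_indices 1 0) = s"
    "card (spread_indices 0 1) = s" "card (spread_indices 1 1) = 2 * s - 2"
    by (simp_all add: spread_indices_def card_A card_B)
qed

lemma card_spread_indices_le: "card (spread_indices u r) \<le> 2 * s - 2"
  using card_spread_indices s_ge_2 by (cases u; cases r) simp_all

lemma card_spread_indices_ge:
  "(u, r) \<noteq> (0, 0) \<Longrightarrow> s \<le> card (spread_indices u r)"
  using card_spread_indices s_ge_2 by (cases u; cases r) simp_all

lemma codeword_add:
  "codeword u r v + codeword u' r' v' = codeword (u + u') (r + r') (v + v')"
proof (rule ext)
  have lin: "a * x + b * y + c + (a' * x + b' * y + c') = (a + a') * x + (b + b') * y + (c + c')"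
    for a b c a' b' c' x y :: bit
    by algebra
  fix x
  show "(codeword u r v + codeword u' r' v') x = codeword (u + u') (r + r') (v + v') x"
    by (cases "x \<in> coords") (simp_all only: plus_fun_apply codeword_def if_True if_False
        dotp_add_left lin add_0)
qed

lemma wt_codeword_0:
  "wt coords (codeword u r 0) = card (spread_indices u r) * (2 ^ t - 1)"
  using wt_spread_word_0[OF spread_indices_sub] by (simp add: codeword_eq_spread_word)

lemma wt_codeword:
  assumes "v \<noteq> 0"
  shows "2 ^ (m - 1) \<le> wt coords (codeword u r v) + card (spread_indices u r)"
    and "wt coords (codeword u r v) + card (spread_indices u r) \<le> 2 ^ (m - 1) + 2 ^ t"
  using wt_spread_word[OF spread_indices_sub assms, of u r]
    card_dual_hits_le_1[OF spread_indices_sub assms, of u r]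
  by (simp_all add: codeword_eq_spread_word)

lemma two_pow_t_le: "2 ^ t \<le> (2::nat) ^ (m - 1)"
  using t_pos m_eq by (intro power_increasing) simp_all

lemma codeword_eq_0_iff: "codeword u r v = 0 \<longleftrightarrow> u = 0 \<and> r = 0 \<and> v = 0"
proof
  assume "codeword u r v = 0"
  then have wt0: "wt coords (codeword u r v) = 0"
    by (simp add: wt_def supp_def)
  show "u = 0 \<and> r = 0 \<and> v = 0"
  proof (cases "v = 0")
    case True
    then have "card (spread_indices u r) = 0"
      using wt0 wt_codeword_0 two_s_add_2_le by simp
    have "(u, r) = (0, 0)"
    proof (rule ccontr)
      assume "(u, r) \<noteq> (0, 0)"
      then have "s \<le> card (spread_indices u r)" by (rule card_spread_indices_ge)
      then show False using \<open>card (spread_indices u r) = 0\<close> s_ge_2 by simp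
    qed
    then show ?thesis using True by simp
  next
    case False
    then show ?thesis
      using wt_codeword(1)[OF False, of u r] wt0 card_spread_indices_le[of u r]
        two_s_add_2_le two_pow_t_le by linarith
  qed
qed (auto simp: codeword_def)

lemma codeword_eq_iff:
  "codeword u r v = codeword u' r' v' \<longleftrightarrow> u = u' \<and> r = r' \<and> v = v'"
proof
  assume "codeword u r v = codeword u' r' v'"
  then have "codeword (u + u') (r + r') (v + v') = 0"
    using codeword_add[of u r v u' r' v'] by simp
  then show "u = u' \<and> r = r' \<and> v = v'"
    by (simp only: codeword_eq_0_iff bit_add_eq_0_iff bit_fun_add_eq_0_iff)
qed simp

lemma inj_codeword: "inj (\<lambda>(u, r, v). codeword u r v)"
  by (auto simp: inj_def codeword_eq_iff)

lemma codeword_in_code: "codeword u r v \<in> code"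
  unfolding mem_code_iff by blast

lemma zero_in_code: "0 \<in> code"
proof -
  have "codeword 0 0 0 = 0"
    by (simp only: codeword_eq_0_iff simp_thms)
  then show ?thesis
    by (metis codeword_in_code)
qed

lemma binary_linear_code_code: "binary_linear_code coords code"
  unfolding binary_linear_code_def fvs.subspace_def
proof (intro conjI ballI allI impI)
  fix a b assume "a \<in> code" "b \<in> code"
  then show "a + b \<in> code"
    unfolding mem_code_iff by (metis codeword_add)
next
  fix c :: bit and a assume "a \<in> code"
  moreover have "fscale 0 a = 0" "fscale 1 a = a"
    by (simp_all only: fscale_def mult_zero_left mult_1_left zero_fun_def)
  ultimately show "fscale c a \<in> code"
    using zero_in_code by (cases c) simp_all
next
  fix a and x :: "'n \<Rightarrow> bit" assume "a \<in> code" "x \<notin> coords"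
  then show "a x = 0"
    unfolding mem_code_iff codeword_def by auto
qed (rule zero_in_code)

lemma code_dim_code: "code_dim code = m + 2"
proof -
  have "fvs.subspace code"
    using binary_linear_code_code by (simp add: binary_linear_code_def)
  then have "2 ^ fvs.dim code = card code"
    by (simp add: card_subspace)
  also have "\<dots> = CARD(bit \<times> bit \<times> ('n \<Rightarrow> bit))"
    unfolding code_eq_range by (rule card_image[OF inj_codeword])
  also have "\<dots> = 2 ^ (m + 2)"
    by (simp add: card_prod card_points UNIV_bit)
  finally show ?thesis
    using power_inject_exp[of "2::nat" "fvs.dim code" "m + 2"] by (simp add: code_dim_def)
qed

lemma wt_codeword_le: "wt coords (codeword u r v) + 2 * 2 ^ t \<le> 2 ^ m"
proof (cases "v = 0")
  case True
  have "card (spread_indices u r) * (2 ^ t - 1) \<le> (2 * s - 2) * 2 ^ t"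
    using card_spread_indices_le by (intro mult_le_mono) simp_all
  moreover have "(2 * s - 2 + 4) * 2 ^ t \<le> 2 ^ t * (2::nat) ^ t"
    using two_s_add_2_le s_ge_2 by (intro mult_le_mono1) linarith
  ultimately show ?thesis
    using True wt_codeword_0 by (simp add: two_pow_m add_mult_distrib)
next
  case False
  have "8 * 2 ^ t \<le> 2 ^ t * (2::nat) ^ t"
    using eight_le_two_pow_t by (intro mult_le_mono1)
  then show ?thesis
    using wt_codeword(2)[OF False, of u r] two_pow_m_minus_1 two_pow_m by linarith
qed

text \<open>Nonzero weights lie in a low band [s(2^t - 1), (2s - 2)(2^t - 1)] (v = 0) and a high
  band [2^(m-1) - (2s - 2), 2^(m-1) + 2^t] (v \<noteq> 0); the sum of two of them always exceeds
  the weight of the sum of the codewords.\<close>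

lemma wt_codeword_add_low_low:
  assumes "(u1, r1) \<noteq> (0, 0)" and "(u2, r2) \<noteq> (0, 0)"
  shows "wt coords (codeword u r 0) < wt coords (codeword u1 r1 0) + wt coords (codeword u2 r2 0)"
proof -
  have "card (spread_indices u r) < card (spread_indices u1 r1) + card (spread_indices u2 r2)"
    using card_spread_indices_le[of u r] card_spread_indices_ge[OF assms(1)]
      card_spread_indices_ge[OF assms(2)] s_ge_2 by linarith
  then have "card (spread_indices u r) * (2 ^ t - 1)
      < (card (spread_indices u1 r1) + card (spread_indices u2 r2)) * (2 ^ t - 1)"
    using two_s_add_2_le by (intro mult_less_mono1) simp_all
  then show ?thesis
    by (simp add: wt_codeword_0 add_mult_distrib)
qed

lemma wt_codeword_add_low_high:
  assumes "(u1, r1) \<noteq> (0, 0)" and "v2 \<noteq> 0" and "v \<noteq> 0"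
  shows "wt coords (codeword u r v) < wt coords (codeword u1 r1 0) + wt coords (codeword u2 r2 v2)"
proof -
  define k where "k = s - 1"
  have k: "s = k + 1" "1 \<le> k"
    using s_ge_2 by (simp_all add: k_def)
  have "8 * k \<le> 2 ^ t * k"
    using eight_le_two_pow_t by (intro mult_le_mono1)
  moreover have "s * (2 ^ t - 1) \<le> wt coords (codeword u1 r1 0)"
    using card_spread_indices_ge[OF assms(1)] wt_codeword_0 by simp
  moreover have "s * (2 ^ t - 1) + s = s * (2 ^ t - 1 + 1)"
    by (simp only: add_mult_distrib2 mult_1_right)
  then have "s * (2 ^ t - 1) + s = 2 ^ t * k + 2 ^ t"
    using k by simp
  ultimately show ?thesis
    using wt_codeword(1)[OF assms(2), of u2 r2] wt_codeword(2)[OF assms(3), of u r]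
      card_spread_indices_le[of u2 r2] k by linarith
qed

lemma wt_codeword_add_high_high:
  assumes "v1 \<noteq> 0" and "v2 \<noteq> 0"
  shows "wt coords (codeword u r v) < wt coords (codeword u1 r1 v1) + wt coords (codeword u2 r2 v2)"
  using wt_codeword(1)[OF assms(1), of u1 r1] wt_codeword(1)[OF assms(2), of u2 r2]
    card_spread_indices_le[of u1 r1] card_spread_indices_le[of u2 r2]
    wt_codeword_le[of u r v] two_s_add_2_le two_pow_m_minus_1
  by linarith

lemma wt_codeword_add_neq:
  assumes "codeword u1 r1 v1 \<noteq> 0" and "codeword u2 r2 v2 \<noteq> 0"
  shows "wt coords (codeword (u1 + u2) (r1 + r2) (v1 + v2))
    \<noteq> wt coords (codeword u1 r1 v1) + wt coords (codeword u2 r2 v2)"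
proof -
  define u where "u = u1 + u2"
  define r where "r = r1 + r2"
  have low: "(u, r) \<noteq> (0, 0)" if "codeword u r 0 \<noteq> 0" for u r
    using that by (auto simp: codeword_eq_0_iff)
  consider "v1 = 0" "v2 = 0" | "v1 = 0" "v2 \<noteq> 0" | "v1 \<noteq> 0" "v2 = 0" | "v1 \<noteq> 0" "v2 \<noteq> 0"
    by blast
  then have "wt coords (codeword u r (v1 + v2))
    < wt coords (codeword u1 r1 v1) + wt coords (codeword u2 r2 v2)"
  proof cases
    case 1
    then show ?thesis
      using assms low wt_codeword_add_low_low[of u1 r1 u2 r2 u r] by simp
  next
    case 2
    then show ?thesis
      using assms low wt_codeword_add_low_high[of u1 r1 v2 "v1 + v2" u r u2 r2] by simp
  next
    case 3
    then show ?thesis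
      using assms low wt_codeword_add_low_high[of u2 r2 v1 "v1 + v2" u r u1 r1] by simp
  next
    case 4
    then show ?thesis
      by (rule wt_codeword_add_high_high)
  qed
  then show ?thesis
    unfolding u_def r_def by simp
qed

lemma minimal_code_code: "minimal_code coords code"
proof (rule minimal_code_if_wt_add_neq[OF binary_linear_code_code])
  show "finite (coords :: ('n \<Rightarrow> bit) set)" by simp
next
  fix a b assume "a \<in> code" "b \<in> code" "a \<noteq> 0" "b \<noteq> 0"
  moreover obtain u1 r1 v1 u2 r2 v2 where "a = codeword u1 r1 v1" "b = codeword u2 r2 v2"
    using \<open>a \<in> code\<close> \<open>b \<in> code\<close> unfolding mem_code_iff by blast
  ultimately show "wt coords (a + b) \<noteq> wt coords a + wt coords b"
    using wt_codeword_add_neq[of u1 r1 v1 u2 r2 v2] by (simp add: codeword_add)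
qed

lemma weight_mset_code:
  "weight_mset coords code =
      {#0#}
      + replicate_mset 2 (s * (2 ^ t - 1))
      + replicate_mset 1 ((2 * s - 2) * (2 ^ t - 1))
      + replicate_mset (2 ^ m - 1) (2 ^ (m - 1))
      + replicate_mset (2 * (2 ^ t + 1 - s) * (2 ^ t - 1)) (2 ^ (m - 1) - s)
      + replicate_mset ((2 ^ t + 3 - 2 * s) * (2 ^ t - 1)) (2 ^ (m - 1) - (2 * s - 2))
      + replicate_mset (2 * s * (2 ^ t - 1)) (2 ^ (m - 1) + 2 ^ t - s)
      + replicate_mset ((2 * s - 2) * (2 ^ t - 1)) (2 ^ (m - 1) + 2 ^ t - (2 * s - 2))"
  (is "_ = ?rhs")
proof -
  define W where "W k =
     {#k * (2 ^ t - 1)#}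
     + replicate_mset ((2 ^ t + 1 - k) * (2 ^ t - 1)) (2 ^ (m - 1) - k)
     + replicate_mset (k * (2 ^ t - 1)) (2 ^ (m - 1) + 2 ^ t - k)" for k
  have fiber: "image_mset (\<lambda>v. wt coords (codeword u r v)) (mset_set UNIV) = W (card (spread_indices u r))"
    for u r
    unfolding codeword_eq_spread_word W_def by (rule weight_mset_spread_words[OF spread_indices_sub])
  have "weight_mset coords code
      = image_mset (\<lambda>p. wt coords (case p of (u, r, v) \<Rightarrow> codeword u r v)) (mset_set UNIV)"
    unfolding weight_mset_def code_eq_range image_mset_mset_set[OF inj_codeword, symmetric]
    by (simp add: multiset.map_comp comp_def)
  also have "\<dots> = W 0 + W s + W s + W (2 * s - 2)"
    by (simp add: image_mset_mset_set_UNIV_bit_prod fiber card_spread_indices add_ac)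
  also have "\<dots> = {#0#} + replicate_mset (2 ^ m - 1) (2 ^ (m - 1))
      + ({#s * (2 ^ t - 1)#} + {#s * (2 ^ t - 1)#})
      + (replicate_mset ((2 ^ t + 1 - s) * (2 ^ t - 1)) (2 ^ (m - 1) - s)
         + replicate_mset ((2 ^ t + 1 - s) * (2 ^ t - 1)) (2 ^ (m - 1) - s))
      + (replicate_mset (s * (2 ^ t - 1)) (2 ^ (m - 1) + 2 ^ t - s)
         + replicate_mset (s * (2 ^ t - 1)) (2 ^ (m - 1) + 2 ^ t - s))
      + W (2 * s - 2)"
    using two_pow_m by (simp add: W_def add_ac algebra_simps)
  also have "\<dots> = ?rhs"
  proof -
    have "2 ^ t + 1 - (2 * s - 2) = 2 ^ t + 3 - 2 * s"
      using s_ge_2 two_s_add_2_le by arith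
    then show ?thesis
      unfolding W_def mult.assoc[of 2] replicate_mset_double
      by (simp add: numeral_2_eq_2 add_ac)
  qed
  finally show ?thesis .
qed

lemma nonzero_weights_code_ratio:
  assumes "s \<le> 2 ^ (t - 2)"
  shows "real (Min (nonzero_weights coords code)) / real (Max (nonzero_weights coords code)) \<le> 1 / 2"
proof -
  let ?W = "nonzero_weights coords code"
  have "finite ?W"
    unfolding nonzero_weights_def by (rule finite_subset[of _ "wt coords ` code"]) auto
  have "codeword 1 0 0 \<noteq> 0"
    by (simp add: codeword_eq_0_iff)
  then have "s * (2 ^ t - 1) \<in> ?W"
    using wt_codeword_0[of 1 0] card_spread_indices(2) codeword_in_code
    unfolding nonzero_weights_def by force
  then have "Min ?W \<le> s * (2 ^ t - 1)"
    by (rule Min_le[OF \<open>finite ?W\<close>])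
  moreover have "s * (2 ^ t - 1) \<le> 2 ^ (t - 2) * 2 ^ t"
    using assms by (intro mult_le_mono) simp_all
  moreover have "2 * (2 ^ (t - 2) * 2 ^ t) = (2::nat) ^ (m - 1)"
  proof -
    have "m - 1 = Suc (t - 2 + t)"
      using m_eq three_le_t by simp
    then show ?thesis by (simp add: power_add)
  qed
  ultimately have min: "2 * Min ?W \<le> 2 ^ (m - 1)"
    by linarith
  define v :: "'n \<Rightarrow> bit" where "v = (\<lambda>_. 1)"
  have "v \<noteq> 0"
    by (simp add: v_def fun_eq_iff)
  then have "codeword 0 0 v \<noteq> 0" "2 ^ (m - 1) \<le> wt coords (codeword 0 0 v)"
    using wt_codeword(1)[of v 0 0] card_spread_indices(1) by (simp_all add: codeword_eq_0_iff)
  moreover have "wt coords (codeword 0 0 v) \<in> ?W"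
    using \<open>codeword 0 0 v \<noteq> 0\<close> codeword_in_code unfolding nonzero_weights_def by blast
  then have "wt coords (codeword 0 0 v) \<le> Max ?W"
    by (rule Max_ge[OF \<open>finite ?W\<close>])
  ultimately have max: "2 ^ (m - 1) \<le> Max ?W"
    by linarith
  show ?thesis
    using min max by (simp add: divide_le_eq)
qed

end

theorem theorem8:
  fixes E :: "nat \<Rightarrow> ('n::finite \<Rightarrow> bit) set"
    and m t s \<alpha> :: nat and A B :: "nat set"
    and f g :: "('n \<Rightarrow> bit) \<Rightarrow> bit"
  assumes "card (UNIV :: 'n set) = m" and "even m" and "m \<ge> 6" and "t = m div 2"
    and "2 \<le> s" and "s \<le> 2 ^ (t - 1) - 1"
    and "partial_spread t \<alpha> E"
    and "A \<subseteq> {1..\<alpha>}" and "B \<subseteq> {1..\<alpha>}"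
    and "card A = s" and "card B = s" and "card (A \<inter> B) = 1"
    and "f = (\<lambda>x. \<Sum>i\<in>A. ind (E i) x)" and "g = (\<lambda>x. \<Sum>i\<in>B. ind (E i) x)"
  shows "binary_linear_code coords (code_fg f g)
      \<and> minimal_code coords (code_fg f g)
      \<and> code_length (coords :: ('n \<Rightarrow> bit) set) = 2 ^ m - 1
      \<and> code_dim (code_fg f g) = m + 2
      \<and> weight_mset coords (code_fg f g) =
          {#0#}
          + replicate_mset 2 (s * (2 ^ t - 1))
          + replicate_mset 1 ((2 * s - 2) * (2 ^ t - 1))
          + replicate_mset (2 ^ m - 1) (2 ^ (m - 1))
          + replicate_mset (2 * (2 ^ t + 1 - s) * (2 ^ t - 1)) (2 ^ (m - 1) - s)
          + replicate_mset ((2 ^ t + 3 - 2 * s) * (2 ^ t - 1)) (2 ^ (m - 1) - (2 * s - 2))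
          + replicate_mset (2 * s * (2 ^ t - 1)) (2 ^ (m - 1) + 2 ^ t - s)
          + replicate_mset ((2 * s - 2) * (2 ^ t - 1)) (2 ^ (m - 1) + 2 ^ t - (2 * s - 2))
      \<and> (s \<le> 2 ^ (t - 2) \<longrightarrow>
          real (Min (nonzero_weights coords (code_fg f g)))
            / real (Max (nonzero_weights coords (code_fg f g))) \<le> 1 / 2)"
proof -
  interpret two_spread_code E t m \<alpha> A B s
    using assms(1-12) by unfold_locales auto
  have fg: "f = spread_fun A" "g = spread_fun B"
    using assms(13,14) by (simp_all add: fun_eq_iff spread_fun_def)
  show ?thesis
    unfolding fg
    using binary_linear_code_code minimal_code_code code_dim_code weight_mset_code
      code_length_coords[where 'n = 'n, unfolded assms(1)] nonzero_weights_code_ratio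
    by blast
qed

end
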